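(* Let $d\ge1$, $s\in(0,1)$ and $0<\lambda\le\Lambda$. There exists $\gamma>0$, depending only on $d,s,\lambda,\Lambda$, with the following property. Let $K:\mathbb{R}^d\to\mathbb{R}$ be a measurable kernel with $\lambda|y|^{-d-s}\le K(y)\le\Lambda|y|^{-d-s}$ and $K(y)=K(-y)$ for all $y\ne0$. Let $E\subset\mathbb{R}^d$ be a Borel set, $x\in\partial E$ and $r_0>0$. If $|E\cap B_r(x)|\le\gamma|B_r|$ for all $r\in(0,r_0]$, then \[ H_{K,E}(x):=\lim_{\varepsilon\to0^+}\int_{\mathbb{R}^d\setminus B_\varepsilon(x)}\tilde\chi_E(y)K(x-y)\,dy=+\infty, \] that is, the limit exists and equals $+\infty$.
   Context: $B_\rho(x)$ is the open ball of radius $\rho$ centred at $x$, $B_\rho=B_\rho(0)$, and $|F|$ denotes Lebesgue measure. $\tilde\chi_E=\chi_{\mathbb{R}^d\setminus E}-\chi_E$. *)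

theory Defs
  imports "HOL-Analysis.Analysis"
begin

definition chi_tilde :: "'a set \<Rightarrow> 'a \<Rightarrow> real" where
  "chi_tilde E y = indicator (- E) y - indicator E y"

definition H_trunc :: "('a::euclidean_space \<Rightarrow> real) \<Rightarrow> 'a set \<Rightarrow> 'a \<Rightarrow> real \<Rightarrow> real" where
  "H_trunc K E x \<epsilon> = (LINT y : - ball x \<epsilon> | lebesgue. chi_tilde E y * K (x - y))"

end

theory Submission
  imports Defs "HOL-Real_Asymp.Real_Asymp"
begin

(* On the annulus B_{2 rho}(x) - B_rho(x) the kernel K(x - y) is comparable to rho^(-d-s): the part
   of the annulus outside E contributes at least lam (2 rho)^(-d-s) per unit volume, while E removes
   at most lam (2 rho)^(-d-s) + Lam rho^(-d-s) per unit volume of E inside B_{2 rho}(x). If E has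
   density at most gamma in every ball B_r(x) with r <= r0 and gamma is small, every such annulus
   therefore contributes at least c rho^(-s) with c > 0. Splitting B_R(x) - B_eps(x) into dyadic
   annuli, with r0/2 <= R <= r0, all contributions are nonnegative and the innermost one is at least
   c eps^(-s); outside B_R(x) the integrand is bounded below by -K(x - y), which is integrable away
   from x. Hence H_eps >= c eps^(-s) - C tends to infinity. *)

definition annulus :: "'a::metric_space \<Rightarrow> real \<Rightarrow> real \<Rightarrow> 'a set" where
  "annulus x a b = ball x b - ball x a"

lemma annulus_Un_annulus: "a \<le> b \<Longrightarrow> b \<le> c \<Longrightarrow> annulus x a b \<union> annulus x b c = annulus x a c"
  by (auto simp: annulus_def)

lemma annulus_Int_annulus: "annulus x a b \<inter> annulus x b c = {}"
  by (auto simp: annulus_def)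

lemma annulus_Un_Compl_ball: "a \<le> b \<Longrightarrow> annulus x a b \<union> - ball x b = - ball x a"
  by (auto simp: annulus_def)

lemma annulus_Int_Compl_ball: "annulus x a b \<inter> - ball x b = {}"
  by (auto simp: annulus_def)

lemma annulus_subset_Compl_ball: "annulus x a b \<subseteq> - ball x a"
  by (auto simp: annulus_def)

lemma lmeasurable_annulus [simp]: "annulus (x::'a::euclidean_space) a b \<in> lmeasurable"
  unfolding annulus_def by (intro fmeasurable_Diff lmeasurable_ball fmeasurableD)

lemma measure_annulus:
  fixes x :: "'a::euclidean_space"
  assumes "0 \<le> a" "a \<le> b"
  shows "measure lebesgue (annulus x a b) = unit_ball_vol DIM('a) * (b ^ DIM('a) - a ^ DIM('a))"
  using assms unfolding annulus_def
  by (subst measurable_measure_Diff) (auto simp: content_ball algebra_simps)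

lemma measurable_lebesgue_reflect:
  fixes f :: "'a::euclidean_space \<Rightarrow> real"
  assumes "f \<in> borel_measurable lebesgue"
  shows "(\<lambda>y. f (x - y)) \<in> borel_measurable lebesgue"
proof -
  have "(\<lambda>y. x + (\<Sum>j\<in>Basis. (- 1 * (y \<bullet> j)) *\<^sub>R j)) \<in> lebesgue \<rightarrow>\<^sub>M (lebesgue :: 'a measure)"
    by (rule lebesgue_affine_measurable) simp
  then have "(\<lambda>y. x - y) \<in> lebesgue \<rightarrow>\<^sub>M (lebesgue :: 'a measure)"
    by (simp add: sum_negf euclidean_representation)
  from measurable_comp[OF this assms] show ?thesis
    by (simp add: o_def)
qed

lemma dyadic_scale_exists:
  fixes \<rho> t :: real
  assumes "0 < \<rho>" "\<rho> \<le> t"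
  shows "\<exists>N. 2 ^ N * \<rho> \<le> t \<and> t < 2 ^ Suc N * \<rho>"
proof (rule ccontr)
  assume no_scale: "\<not> ?thesis"
  have below: "2 ^ N * \<rho> \<le> t" for N
    by (induction N) (use no_scale assms in \<open>auto simp: not_less\<close>)
  obtain N where "t / \<rho> < 2 ^ N"
    using real_arch_pow[of 2 "t / \<rho>"] by auto
  with below[of N] assms show False
    by (simp add: field_simps)
qed

lemma ennreal_le_suminf: "(f N :: ennreal) \<le> suminf f"
  using sum_le_suminf[of f "{N}"] by (simp add: summableI)

lemma set_integrable_dist_powr_outside_ball:
  fixes x :: "'a::euclidean_space"
  assumes s: "0 < s" and \<rho>: "0 < \<rho>"
  shows "set_integrable lebesgue (- ball x \<rho>) (\<lambda>y. dist x y powr (- real DIM('a) - s))"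
proof -
  define p where "p = - real DIM('a) - s"
  define \<omega> where "\<omega> = unit_ball_vol (real DIM('a))"
  define q where "q = (2::real) powr (- s)"
  define a where "a j = (2 ^ j * \<rho>) powr p * (\<omega> * (2 ^ Suc j * \<rho>) ^ DIM('a))" for j
  have q: "0 < q" "q < 1"
    unfolding q_def using s powr_less_mono[of "- s" 0 "2::real"] by auto
  have a_geometric: "a j = \<omega> * 2 ^ DIM('a) * \<rho> powr (- s) * q ^ j" for j
  proof -
    have "(2 ^ j * \<rho>) powr p * (2 ^ j * \<rho>) ^ DIM('a) = (2 ^ j * \<rho>) powr (- s)"
      using \<rho> by (simp add: p_def powr_realpow[symmetric] powr_add[symmetric])
    also have "\<dots> = q ^ j * \<rho> powr (- s)"
      using \<rho> by (simp add: q_def powr_mult powr_realpow[symmetric] powr_powr powr_power mult.commute)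
    finally show ?thesis
      by (simp add: a_def power_mult_distrib mult_ac)
  qed
  have "summable a"
    unfolding a_geometric by (intro summable_mult summable_geometric) (use q in auto)
  have a_nonneg: "0 \<le> a j" for j
    unfolding a_geometric \<omega>_def using q by auto
  \<comment> \<open>Dominate by a series over dyadic balls; the j-th term integrates to a j, of order 2 powr (- s * j).\<close>
  have dominated: "ennreal (indicator (- ball x \<rho>) y * dist x y powr p)
      \<le> (\<Sum>j. ennreal ((2 ^ j * \<rho>) powr p) * indicator (ball x (2 ^ Suc j * \<rho>)) y)" for y
  proof (cases "dist x y < \<rho>")
    case False
    then obtain N where N: "2 ^ N * \<rho> \<le> dist x y" "dist x y < 2 ^ Suc N * \<rho>"
      using dyadic_scale_exists[OF \<rho>, of "dist x y"] by auto
    have "dist x y powr p \<le> (2 ^ N * \<rho>) powr p"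
      by (rule powr_mono2') (use N \<rho> s in \<open>auto simp: p_def\<close>)
    then have "ennreal (indicator (- ball x \<rho>) y * dist x y powr p)
       \<le> ennreal ((2 ^ N * \<rho>) powr p) * indicator (ball x (2 ^ Suc N * \<rho>)) y"
      using N by (auto simp: indicator_def ennreal_leI)
    also have "\<dots> \<le> (\<Sum>j. ennreal ((2 ^ j * \<rho>) powr p) * indicator (ball x (2 ^ Suc j * \<rho>)) y)"
      by (rule ennreal_le_suminf)
    finally show ?thesis .
  qed simp
  have "(\<integral>\<^sup>+y. ennreal (indicator (- ball x \<rho>) y * dist x y powr p) \<partial>lebesgue)
      \<le> (\<integral>\<^sup>+y. (\<Sum>j. ennreal ((2 ^ j * \<rho>) powr p) * indicator (ball x (2 ^ Suc j * \<rho>)) y) \<partial>lebesgue)"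
    by (rule nn_integral_mono) (rule dominated)
  also have "\<dots> = (\<Sum>j. \<integral>\<^sup>+y. ennreal ((2 ^ j * \<rho>) powr p) * indicator (ball x (2 ^ Suc j * \<rho>)) y \<partial>lebesgue)"
    by (intro nn_integral_suminf borel_measurable_times_ennreal borel_measurable_indicator
        borel_measurable_const fmeasurableD lmeasurable_ball)
  also have "\<dots> = (\<Sum>j. ennreal (a j))"
    using \<rho> by (simp add: nn_integral_cmult_indicator emeasure_ball a_def \<omega>_def ennreal_mult[symmetric])
  also have "\<dots> = ennreal (suminf a)"
    by (rule suminf_ennreal2[OF a_nonneg \<open>summable a\<close>])
  also have "\<dots> < \<infinity>"
    by simp
  finally show ?thesis
    unfolding set_integrable_def p_def[symmetric]
    by (intro integrableI_nonneg) (auto intro: measurable_completion)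
qed

lemma set_integral_ge_affine_indicator:
  fixes g :: "'a \<Rightarrow> real"
  assumes A: "A \<in> fmeasurable M" and E: "E \<in> sets M" and g: "set_integrable M A g"
    and below: "\<And>y. y \<in> A \<Longrightarrow> \<alpha> - \<beta> * indicator E y \<le> g y"
  shows "\<alpha> * measure M A - \<beta> * measure M (A \<inter> E) \<le> (LINT y:A|M. g y)"
proof -
  have AE: "A \<inter> E \<in> fmeasurable M"
    using A E by (rule fmeasurable_Int_fmeasurable)
  have step: "(\<lambda>y. indicator A y *\<^sub>R (\<alpha> - \<beta> * indicator E y)) =
      (\<lambda>y. \<alpha> * indicator A y - \<beta> * indicator (A \<inter> E) y)"
    by (auto simp: indicator_def fun_eq_iff)
  have step_integrable: "set_integrable M A (\<lambda>y. \<alpha> - \<beta> * indicator E y)"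
    unfolding set_integrable_def step using A AE
    by (intro Bochner_Integration.integrable_diff Bochner_Integration.integrable_mult_right
        integrable_real_indicator) (auto simp: fmeasurable_def)
  have "(LINT y:A|M. \<alpha> - \<beta> * indicator E y) = \<alpha> * measure M A - \<beta> * measure M (A \<inter> E)"
    unfolding set_lebesgue_integral_def step using A AE
    by (subst Bochner_Integration.integral_diff) (auto simp: fmeasurable_def)
  moreover have "(LINT y:A|M. \<alpha> - \<beta> * indicator E y) \<le> (LINT y:A|M. g y)"
    using step_integrable g below by (rule set_integral_mono)
  ultimately show ?thesis
    by simp
qed

lemma set_integral_dyadic_annuli_ge:
  fixes h :: "'a::euclidean_space \<Rightarrow> real"
  assumes integrable: "\<And>a b. 0 < a \<Longrightarrow> set_integrable lebesgue (annulus x a b) h"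
    and nonneg: "\<And>\<rho>. 0 < \<rho> \<Longrightarrow> 2 * \<rho> \<le> r \<Longrightarrow> 0 \<le> (LINT y:annulus x \<rho> (2 * \<rho>)|lebesgue. h y)"
    and \<rho>: "0 < \<rho>"
  shows "2 ^ Suc n * \<rho> \<le> r \<Longrightarrow>
    (LINT y:annulus x \<rho> (2 * \<rho>)|lebesgue. h y) \<le> (LINT y:annulus x \<rho> (2 ^ Suc n * \<rho>)|lebesgue. h y)"
proof (induction n)
  case 0
  then show ?case
    by simp
next
  case (Suc n)
  define R where "R = 2 ^ Suc n * \<rho>"
  have "1 \<le> (2::real) ^ Suc n"
    by (rule one_le_power) simp
  then have R: "\<rho> \<le> R" "2 * R \<le> r"
    using Suc.prems \<rho> by (simp_all add: R_def)
  have IH: "(LINT y:annulus x \<rho> (2 * \<rho>)|lebesgue. h y) \<le> (LINT y:annulus x \<rho> R|lebesgue. h y)"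
    using R \<rho> by (intro Suc.IH[folded R_def]) linarith
  have outer: "0 \<le> (LINT y:annulus x R (2 * R)|lebesgue. h y)"
    using R \<rho> by (intro nonneg) simp_all
  have split: "(LINT y:annulus x \<rho> (2 * R)|lebesgue. h y) =
      (LINT y:annulus x \<rho> R|lebesgue. h y) + (LINT y:annulus x R (2 * R)|lebesgue. h y)"
    using R \<rho> by (subst annulus_Un_annulus[symmetric, of \<rho> R])
      (auto intro!: set_integral_Un annulus_Int_annulus integrable)
  have double: "2 ^ Suc (Suc n) * \<rho> = 2 * R"
    by (simp add: R_def)
  show ?case
    unfolding double using IH outer split by linarith
qed

(* The kernel seen from the point x: f y plays the role of K (x - y). *)
locale comparable_fractional_kernel =
  fixes f :: "'a::euclidean_space \<Rightarrow> real" and x :: 'a and s lam Lam :: real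
  assumes s_pos: "0 < s" and lam_pos: "0 < lam" and lam_le_Lam: "lam \<le> Lam"
    and measurable_kernel: "f \<in> borel_measurable lebesgue"
    and kernel_ge: "\<And>y. y \<noteq> x \<Longrightarrow> lam * dist x y powr (- real DIM('a) - s) \<le> f y"
    and kernel_le: "\<And>y. y \<noteq> x \<Longrightarrow> f y \<le> Lam * dist x y powr (- real DIM('a) - s)"
begin

definition annulus_margin :: "real \<Rightarrow> real" where
  "annulus_margin \<gamma> = lam * 2 powr (- real DIM('a) - s) * (2 ^ DIM('a) - 1)
    - \<gamma> * (lam * 2 powr (- s) + Lam * 2 ^ DIM('a))"

lemma kernel_nonneg: "y \<noteq> x \<Longrightarrow> 0 \<le> f y"
  using lam_pos by (intro order_trans[OF _ kernel_ge]) auto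

lemma set_integrable_kernel_outside_ball:
  assumes "0 < \<rho>"
  shows "set_integrable lebesgue (- ball x \<rho>) f"
proof (rule set_integrable_bound)
  show "set_integrable lebesgue (- ball x \<rho>) (\<lambda>y. Lam * dist x y powr (- real DIM('a) - s))"
    by (intro set_integrable_mult_right set_integrable_dist_powr_outside_ball s_pos assms)
  show "set_borel_measurable lebesgue (- ball x \<rho>) f"
    unfolding set_borel_measurable_def using measurable_kernel fmeasurableD[OF lmeasurable_ball]
    by measurable
  show "AE y in lebesgue. y \<in> - ball x \<rho> \<longrightarrow> norm (f y) \<le> norm (Lam * dist x y powr (- real DIM('a) - s))"
  proof (rule AE_I2, intro impI)
    fix y assume "y \<in> - ball x \<rho>"
    then have "y \<noteq> x"
      using assms by auto
    then show "norm (f y) \<le> norm (Lam * dist x y powr (- real DIM('a) - s))"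
      using kernel_le[of y] kernel_nonneg[of y] by simp
  qed
qed

lemma set_integrable_signed_kernel_outside_ball:
  assumes "E \<in> sets lebesgue" "0 < \<rho>"
  shows "set_integrable lebesgue (- ball x \<rho>) (\<lambda>y. chi_tilde E y * f y)"
proof (rule set_integrable_bound[OF set_integrable_kernel_outside_ball[OF assms(2)]])
  show "set_borel_measurable lebesgue (- ball x \<rho>) (\<lambda>y. chi_tilde E y * f y)"
    unfolding set_borel_measurable_def chi_tilde_def
    using measurable_kernel assms(1) fmeasurableD[OF lmeasurable_ball] by measurable
qed (auto simp: chi_tilde_def indicator_def)

lemma set_integrable_signed_kernel_annulus:
  assumes "E \<in> sets lebesgue" "0 < a"
  shows "set_integrable lebesgue (annulus x a b) (\<lambda>y. chi_tilde E y * f y)"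
  using set_integrable_signed_kernel_outside_ball[OF assms]
  by (rule set_integrable_subset) (auto simp: annulus_subset_Compl_ball intro: fmeasurableD)

lemma signed_kernel_integral_annulus_ge:
  assumes E: "E \<in> sets lebesgue" and \<rho>: "0 < \<rho>"
    and density: "measure lebesgue (E \<inter> ball x (2 * \<rho>)) \<le> \<gamma> * measure lebesgue (ball (0::'a) (2 * \<rho>))"
  shows "unit_ball_vol DIM('a) * annulus_margin \<gamma> * \<rho> powr (- s)
    \<le> (LINT y:annulus x \<rho> (2 * \<rho>)|lebesgue. chi_tilde E y * f y)"
proof -
  define d where "d = DIM('a)"
  define p where "p = - real d - s"
  define \<omega> where "\<omega> = unit_ball_vol d"
  define \<alpha> where "\<alpha> = lam * (2 * \<rho>) powr p"
  define \<beta> where "\<beta> = \<alpha> + Lam * \<rho> powr p"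
  have "0 \<le> Lam"
    using lam_pos lam_le_Lam by linarith
  \<comment> \<open>On the annulus, \<alpha> bounds f from below and \<alpha> - \<beta> bounds - f from below.\<close>
  have below: "\<alpha> - \<beta> * indicator E y \<le> chi_tilde E y * f y" if "y \<in> annulus x \<rho> (2 * \<rho>)" for y
  proof -
    have y: "\<rho> \<le> dist x y" "dist x y < 2 * \<rho>" "y \<noteq> x"
      using that \<rho> by (auto simp: annulus_def)
    have p: "p \<le> 0"
      using s_pos by (simp add: p_def)
    have "\<alpha> \<le> lam * dist x y powr p"
      unfolding \<alpha>_def using lam_pos y \<rho> p by (intro mult_left_mono powr_mono2') auto
    also have "\<dots> \<le> f y"
      using kernel_ge[OF y(3)] by (simp add: p_def d_def)
    finally have "\<alpha> \<le> f y" .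
    have "f y \<le> Lam * dist x y powr p"
      using kernel_le[OF y(3)] by (simp add: p_def d_def)
    also have "\<dots> \<le> Lam * \<rho> powr p"
      using \<open>0 \<le> Lam\<close> y \<rho> p by (intro mult_left_mono powr_mono2') auto
    finally have "f y \<le> Lam * \<rho> powr p" .
    with \<open>\<alpha> \<le> f y\<close> show ?thesis
      by (auto simp: chi_tilde_def indicator_def \<beta>_def)
  qed
  have "measure lebesgue (annulus x \<rho> (2 * \<rho>) \<inter> E) \<le> measure lebesgue (E \<inter> ball x (2 * \<rho>))"
    using fmeasurable_Int_fmeasurable[OF lmeasurable_ball E, of x "2 * \<rho>"] E
    by (intro measure_mono_fmeasurable) (auto simp: annulus_def Int_commute)
  also have "\<dots> \<le> \<gamma> * (\<omega> * (2 * \<rho>) ^ d)"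
    using density \<rho> by (simp add: content_ball \<omega>_def d_def)
  finally have measure_E: "measure lebesgue (annulus x \<rho> (2 * \<rho>) \<inter> E) \<le> \<gamma> * (\<omega> * (2 * \<rho>) ^ d)" .
  have "\<rho> powr (- s) = \<rho> powr p * \<rho> ^ d" "2 powr (- s) = 2 powr p * 2 ^ d"
    using \<rho> by (simp_all add: p_def powr_realpow[symmetric] powr_add[symmetric])
  moreover have "(2 * \<rho>) powr p = 2 powr p * \<rho> powr p" "(2 * \<rho>) ^ d = 2 ^ d * \<rho> ^ d"
    using \<rho> by (simp_all add: powr_mult power_mult_distrib)
  ultimately have "\<omega> * (lam * 2 powr p * (2 ^ d - 1) - \<gamma> * (lam * 2 powr (- s) + Lam * 2 ^ d)) * \<rho> powr (- s)
      = \<alpha> * (\<omega> * ((2 * \<rho>) ^ d - \<rho> ^ d)) - \<beta> * (\<gamma> * (\<omega> * (2 * \<rho>) ^ d))"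
    unfolding \<alpha>_def \<beta>_def by (simp add: algebra_simps)
  also have "\<dots> \<le> \<alpha> * measure lebesgue (annulus x \<rho> (2 * \<rho>)) - \<beta> * measure lebesgue (annulus x \<rho> (2 * \<rho>) \<inter> E)"
    using \<rho> lam_pos \<open>0 \<le> Lam\<close> measure_E
    by (simp add: measure_annulus \<omega>_def d_def \<beta>_def \<alpha>_def mult_left_mono)
  also have "\<dots> \<le> (LINT y:annulus x \<rho> (2 * \<rho>)|lebesgue. chi_tilde E y * f y)"
    using E below set_integrable_signed_kernel_annulus[OF E \<rho>]
    by (intro set_integral_ge_affine_indicator) auto
  finally show ?thesis
    unfolding annulus_margin_def \<omega>_def p_def d_def .
qed

lemma signed_kernel_integral_outside_ball_ge:
  assumes E: "E \<in> sets lebesgue" and r: "0 < r" "r \<le> R"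
  shows "- (LINT y:- ball x r|lebesgue. f y) \<le> (LINT y:- ball x R|lebesgue. chi_tilde E y * f y)"
proof -
  have R: "0 < R"
    using r by linarith
  have "0 \<le> (LINT y:annulus x r R|lebesgue. f y)"
    unfolding set_lebesgue_integral_def using r
    by (intro Bochner_Integration.integral_nonneg) (auto simp: annulus_def indicator_def intro!: kernel_nonneg)
  moreover have "(LINT y:- ball x r|lebesgue. f y)
      = (LINT y:annulus x r R|lebesgue. f y) + (LINT y:- ball x R|lebesgue. f y)"
    using r R set_integrable_kernel_outside_ball
    by (subst annulus_Un_Compl_ball[symmetric, of r R])
      (auto intro!: set_integral_Un annulus_Int_Compl_ball set_integrable_subset[OF _ _ annulus_subset_Compl_ball]
        intro: fmeasurableD)
  moreover have "(LINT y:- ball x R|lebesgue. - f y) \<le> (LINT y:- ball x R|lebesgue. chi_tilde E y * f y)"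
  proof (rule set_integral_mono)
    show "set_integrable lebesgue (- ball x R) (\<lambda>y. - f y)"
      using set_integrable_kernel_outside_ball[OF R] unfolding set_integrable_def by simp
    show "set_integrable lebesgue (- ball x R) (\<lambda>y. chi_tilde E y * f y)"
      using E R by (rule set_integrable_signed_kernel_outside_ball)
    show "- f y \<le> chi_tilde E y * f y" if "y \<in> - ball x R" for y
    proof -
      have "y \<noteq> x"
        using that R by auto
      then show ?thesis
        using kernel_nonneg[of y] by (auto simp: chi_tilde_def indicator_def)
    qed
  qed
  ultimately show ?thesis
    using set_integral_uminus[OF set_integrable_kernel_outside_ball[OF R]] by linarith
qed

lemma signed_kernel_integral_tendsto_at_top:
  assumes E: "E \<in> sets lebesgue" and r0: "0 < r0"
    and margin: "0 < annulus_margin \<gamma>"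
    and density: "\<And>r. 0 < r \<Longrightarrow> r \<le> r0 \<Longrightarrow> measure lebesgue (E \<inter> ball x r) \<le> \<gamma> * measure lebesgue (ball (0::'a) r)"
  shows "filterlim (\<lambda>\<epsilon>. LINT y:- ball x \<epsilon>|lebesgue. chi_tilde E y * f y) at_top (at_right 0)"
proof -
  define h where "h y = chi_tilde E y * f y" for y
  define c where "c = unit_ball_vol DIM('a) * annulus_margin \<gamma>"
  define C where "C = (LINT y:- ball x (r0 / 2)|lebesgue. f y)"
  have c: "0 < c"
    using margin by (simp add: c_def)
  have annulus: "c * \<rho> powr (- s) \<le> (LINT y:annulus x \<rho> (2 * \<rho>)|lebesgue. h y)" if "0 < \<rho>" "2 * \<rho> \<le> r0" for \<rho>
    unfolding c_def h_def using that density
    by (intro signed_kernel_integral_annulus_ge E) auto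
  have "c * \<epsilon> powr (- s) - C \<le> (LINT y:- ball x \<epsilon>|lebesgue. h y)" if \<epsilon>: "0 < \<epsilon>" "2 * \<epsilon> \<le> r0" for \<epsilon>
  proof -
    obtain N where N: "2 ^ N * (2 * \<epsilon>) \<le> r0" "r0 < 2 ^ Suc N * (2 * \<epsilon>)"
      using dyadic_scale_exists[of "2 * \<epsilon>" r0] \<epsilon> by auto
    define R where "R = 2 ^ Suc N * \<epsilon>"
    have "1 \<le> (2::real) ^ Suc N"
      by (rule one_le_power) simp
    then have R: "\<epsilon> \<le> R" "r0 / 2 \<le> R" "R \<le> r0"
      using N \<epsilon> by (simp_all add: R_def)
    have "c * \<epsilon> powr (- s) \<le> (LINT y:annulus x \<epsilon> (2 * \<epsilon>)|lebesgue. h y)"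
      using annulus \<epsilon> .
    also have "\<dots> \<le> (LINT y:annulus x \<epsilon> R|lebesgue. h y)"
      unfolding R_def
    proof (rule set_integral_dyadic_annuli_ge)
      show "set_integrable lebesgue (annulus x a b) h" if "0 < a" for a b
        unfolding h_def using E that by (rule set_integrable_signed_kernel_annulus)
      show "0 \<le> (LINT y:annulus x \<rho> (2 * \<rho>)|lebesgue. h y)" if "0 < \<rho>" "2 * \<rho> \<le> r0" for \<rho>
        using c by (intro order_trans[OF _ annulus[OF that]]) simp
    qed (use \<epsilon> N in simp_all)
    finally have "c * \<epsilon> powr (- s) \<le> (LINT y:annulus x \<epsilon> R|lebesgue. h y)" .
    moreover have "- C \<le> (LINT y:- ball x R|lebesgue. h y)"
      unfolding C_def h_def using R r0 by (intro signed_kernel_integral_outside_ball_ge E) auto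
    moreover have "(LINT y:- ball x \<epsilon>|lebesgue. h y)
        = (LINT y:annulus x \<epsilon> R|lebesgue. h y) + (LINT y:- ball x R|lebesgue. h y)"
      unfolding h_def using \<epsilon> R
      by (subst annulus_Un_Compl_ball[symmetric, of \<epsilon> R])
        (auto intro!: set_integral_Un annulus_Int_Compl_ball set_integrable_signed_kernel_annulus
          set_integrable_signed_kernel_outside_ball E)
    ultimately show ?thesis
      by linarith
  qed
  then have "eventually (\<lambda>\<epsilon>. c * \<epsilon> powr (- s) - C \<le> (LINT y:- ball x \<epsilon>|lebesgue. h y)) (at_right 0)"
    unfolding eventually_at_right_field using r0 by (intro exI[of _ "r0 / 2"]) auto
  moreover have "filterlim (\<lambda>\<epsilon>. c * \<epsilon> powr (- s) - C) at_top (at_right 0)"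
    using c s_pos by real_asymp
  ultimately show ?thesis
    unfolding h_def by (rule filterlim_at_top_mono[rotated])
qed

end

theorem lemma4p2:
  fixes s lam Lam :: real
  assumes "0 < s" "s < 1" "0 < lam" "lam \<le> Lam"
  shows "\<exists>\<gamma>>0. \<forall>(K :: 'a::euclidean_space \<Rightarrow> real) E x r0.
     K \<in> borel_measurable lebesgue \<longrightarrow>
     (\<forall>y. y \<noteq> 0 \<longrightarrow> lam * norm y powr (- real DIM('a) - s) \<le> K y
                    \<and> K y \<le> Lam * norm y powr (- real DIM('a) - s)
                    \<and> K y = K (- y)) \<longrightarrow>
     E \<in> sets borel \<longrightarrow> x \<in> frontier E \<longrightarrow> 0 < r0 \<longrightarrow>
     (\<forall>r. 0 < r \<and> r \<le> r0 \<longrightarrow>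
        measure lebesgue (E \<inter> ball x r) \<le> \<gamma> * measure lebesgue (ball (0::'a) r)) \<longrightarrow>
     filterlim (H_trunc K E x) at_top (at_right 0)"
proof -
  define a where "a = lam * 2 powr (- real DIM('a) - s) * (2 ^ DIM('a) - 1)"
  define b where "b = lam * 2 powr (- s) + Lam * 2 ^ DIM('a)"
  define \<gamma> where "\<gamma> = a / (2 * b)"
  have "1 < (2::real) ^ DIM('a)"
    by (rule one_less_power) simp_all
  then have "0 < a" "0 < b"
    using assms by (simp_all add: a_def b_def add_pos_nonneg)
  then have "0 < \<gamma>" "\<gamma> * b < a"
    by (simp_all add: \<gamma>_def field_simps)
  show ?thesis
  proof (intro exI[of _ \<gamma>] conjI \<open>0 < \<gamma>\<close> allI impI)
    fix K :: "'a \<Rightarrow> real" and E :: "'a set" and x :: 'a and r0 :: real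
    assume K: "K \<in> borel_measurable lebesgue"
      and bounds: "\<forall>y. y \<noteq> 0 \<longrightarrow> lam * norm y powr (- real DIM('a) - s) \<le> K y
                    \<and> K y \<le> Lam * norm y powr (- real DIM('a) - s) \<and> K y = K (- y)"
      and E: "E \<in> sets borel" and "x \<in> frontier E" and r0: "0 < r0"
      and density: "\<forall>r. 0 < r \<and> r \<le> r0 \<longrightarrow>
        measure lebesgue (E \<inter> ball x r) \<le> \<gamma> * measure lebesgue (ball (0::'a) r)"
    have kernel_bounds: "lam * dist x y powr (- real DIM('a) - s) \<le> K (x - y)
        \<and> K (x - y) \<le> Lam * dist x y powr (- real DIM('a) - s)" if "y \<noteq> x" for y
      using bounds[rule_format, of "x - y"] that by (simp add: dist_norm)
    interpret comparable_fractional_kernel "\<lambda>y. K (x - y)" x s lam Lam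
      by unfold_locales (use assms measurable_lebesgue_reflect[OF K] kernel_bounds in simp_all)
    have "E \<in> sets lebesgue"
      using E by (simp add: sets_completionI_sets)
    moreover have "0 < annulus_margin \<gamma>"
      using \<open>\<gamma> * b < a\<close> by (simp add: annulus_margin_def a_def b_def)
    ultimately show "filterlim (H_trunc K E x) at_top (at_right 0)"
      unfolding H_trunc_def[abs_def] using density
      by (intro signed_kernel_integral_tendsto_at_top[OF _ r0]) auto
  qed
qed

end
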